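(* Let $G$ be a finite group acting linearly on $V\cong\mathbb{C}^n$. If $\alpha$ and $\beta$ are $G$-invariant $2$-cochains with $\beta$ linear and $\alpha$ linear or constant, then $\phi(\alpha,\beta)$ and $\psi(\alpha)$ are $G$-invariant. Specifically, for all $g,h,x,y\in G$ and $v_1,v_2,v_3\in V$, $$h\cdot(\phi_{x,y}(v_1,v_2,v_3))=\phi_{hxh^{-1},hyh^{-1}}(hv_1,hv_2,hv_3),$$ $$h\cdot(\phi_g(v_1,v_2,v_3))=\phi_{hgh^{-1}}(hv_1,hv_2,hv_3),\qquad h\cdot(\psi_g(v_1,v_2,v_3))=\psi_{hgh^{-1}}(hv_1,hv_2,hv_3).$$
   Context: A linear (resp. constant) 2-cochain is $\alpha=\sum_g\alpha_gg$ with $\alpha_g:\bigwedge^2V\to V$ (resp. $\to\mathbb{C}$) linear; it is $G$-invariant if $h(\alpha_g(v,w))=\alpha_{hgh^{-1}}(hv,hw)$ for all $g,h,v,w$. For such $\alpha$, $\psi(\alpha)=\sum_g\psi_gg$ with $\psi_g(v_1,v_2,v_3)=\alpha_g(v_1,v_2)(gv_3-v_3)+\alpha_g(v_2,v_3)(gv_1-v_1)+\alpha_g(v_3,v_1)(gv_2-v_2)\in S(V)$. For $\alpha$ linear or constant and $\beta$ linear, $\phi(\alpha,\beta)=\sum_g\phi_gg$ with $\phi_g=\sum_{xy=g}\phi_{x,y}$ and $\phi_{x,y}(v_1,v_2,v_3)=\alpha_x(v_1+yv_1,\beta_y(v_2,v_3))+\alpha_x(v_2+yv_2,\beta_y(v_3,v_1))+\alpha_x(v_3+yv_3,\beta_y(v_1,v_2))$.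 $G$ acts on $S(V)$ by algebra automorphisms extending its action on $V$ (and trivially on $\mathbb{C}$). A 3-cochain $\sum_g\gamma_gg$ is $G$-invariant if $h(\gamma_g(v_1,v_2,v_3))=\gamma_{hgh^{-1}}(hv_1,hv_2,hv_3)$. *)

theory Defs
  imports "HOL-Analysis.Analysis" "HOL-Library.Poly_Mapping" "HOL-Algebra.Group"
begin

text \<open>S(V) is the polynomial ring C[x_i | i :: 'n], represented
  with Poly_Mapping as (monomial => coefficient); a vector v is identified with the
  linear polynomial sum_i v_i x_i, and a scalar c with the constant polynomial c.\<close>

type_synonym 'n symalg = "('n \<Rightarrow>\<^sub>0 nat) \<Rightarrow>\<^sub>0 complex"

definition vecS :: "complex^'n::finite \<Rightarrow> 'n symalg" where
  "vecS v = (\<Sum>i\<in>UNIV. Poly_Mapping.single (Poly_Mapping.single i 1) (v $ i))"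

definition constS :: "complex \<Rightarrow> 'n symalg" where
  "constS c = Poly_Mapping.single 0 c"

abbreviation clinV :: "(complex^'n::finite \<Rightarrow> complex^'n) \<Rightarrow> bool" where
  "clinV f \<equiv> Vector_Spaces.linear (*s) (*s) f"

abbreviation clinC :: "(complex^'n::finite \<Rightarrow> complex) \<Rightarrow> bool" where
  "clinC f \<equiv> Vector_Spaces.linear (*s) (*) f"

text \<open>Linear maps on \<Lambda>^2 V = alternating bilinear maps.\<close>
definition alt_bilinV :: "(complex^'n::finite \<Rightarrow> complex^'n \<Rightarrow> complex^'n) \<Rightarrow> bool" where
  "alt_bilinV f \<longleftrightarrow> (\<forall>w. clinV (\<lambda>v. f v w)) \<and> (\<forall>v. clinV (f v)) \<and> (\<forall>v. f v v = 0)"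

definition alt_bilinC :: "(complex^'n::finite \<Rightarrow> complex^'n \<Rightarrow> complex) \<Rightarrow> bool" where
  "alt_bilinC f \<longleftrightarrow> (\<forall>w. clinC (\<lambda>v. f v w)) \<and> (\<forall>v. clinC (f v)) \<and> (\<forall>v. f v v = 0)"

definition lin_action :: "('g, 'b) monoid_scheme \<Rightarrow> ('g \<Rightarrow> complex^'n::finite \<Rightarrow> complex^'n) \<Rightarrow> bool" where
  "lin_action G \<rho> \<longleftrightarrow> group G \<and> finite (carrier G) \<and>
     (\<forall>g\<in>carrier G. clinV (\<rho> g)) \<and> \<rho> \<one>\<^bsub>G\<^esub> = id \<and>
     (\<forall>g\<in>carrier G. \<forall>h\<in>carrier G. \<rho> (g \<otimes>\<^bsub>G\<^esub> h) = \<rho> g \<circ> \<rho> h)"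

text \<open>actS is the action of G on S(V) by algebra automorphisms extending the action on V
  (and trivial on C); such actS exists and is unique.\<close>
definition S_action :: "('g, 'b) monoid_scheme \<Rightarrow> ('g \<Rightarrow> complex^'n::finite \<Rightarrow> complex^'n)
     \<Rightarrow> ('g \<Rightarrow> 'n symalg \<Rightarrow> 'n symalg) \<Rightarrow> bool" where
  "S_action G \<rho> actS \<longleftrightarrow> (\<forall>h\<in>carrier G.
      bij (actS h) \<and>
      (\<forall>p q. actS h (p + q) = actS h p + actS h q) \<and>
      (\<forall>p q. actS h (p * q) = actS h p * actS h q) \<and>
      (\<forall>c. actS h (constS c) = constS c) \<and>
      (\<forall>v. actS h (vecS v) = vecS (\<rho> h v)))"

abbreviation conj :: "('g, 'b) monoid_scheme \<Rightarrow> 'g \<Rightarrow> 'g \<Rightarrow> 'g" where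
  "conj G h g \<equiv> h \<otimes>\<^bsub>G\<^esub> g \<otimes>\<^bsub>G\<^esub> inv\<^bsub>G\<^esub> h"

definition inv_linear :: "('g, 'b) monoid_scheme \<Rightarrow> ('g \<Rightarrow> complex^'n::finite \<Rightarrow> complex^'n)
     \<Rightarrow> ('g \<Rightarrow> complex^'n \<Rightarrow> complex^'n \<Rightarrow> complex^'n) \<Rightarrow> bool" where
  "inv_linear G \<rho> \<alpha> \<longleftrightarrow> (\<forall>g\<in>carrier G. \<forall>h\<in>carrier G. \<forall>v w.
      \<rho> h (\<alpha> g v w) = \<alpha> (conj G h g) (\<rho> h v) (\<rho> h w))"

definition inv_const :: "('g, 'b) monoid_scheme \<Rightarrow> ('g \<Rightarrow> complex^'n::finite \<Rightarrow> complex^'n)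
     \<Rightarrow> ('g \<Rightarrow> complex^'n \<Rightarrow> complex^'n \<Rightarrow> complex) \<Rightarrow> bool" where
  "inv_const G \<rho> \<alpha> \<longleftrightarrow> (\<forall>g\<in>carrier G. \<forall>h\<in>carrier G. \<forall>v w.
      \<alpha> g v w = \<alpha> (conj G h g) (\<rho> h v) (\<rho> h w))"

text \<open>psi and phi, with values in S(V); the parameter e is the embedding of the
  value space of alpha (V via vecS in the linear case, C via constS in the constant case).\<close>
definition psi :: "('a \<Rightarrow> 'n symalg) \<Rightarrow> ('g \<Rightarrow> complex^'n::finite \<Rightarrow> complex^'n)
     \<Rightarrow> ('g \<Rightarrow> complex^'n \<Rightarrow> complex^'n \<Rightarrow> 'a) \<Rightarrow> 'g
     \<Rightarrow> complex^'n \<Rightarrow> complex^'n \<Rightarrow> complex^'n \<Rightarrow> 'n symalg" where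
  "psi e \<rho> \<alpha> g v1 v2 v3 =
     e (\<alpha> g v1 v2) * vecS (\<rho> g v3 - v3) + e (\<alpha> g v2 v3) * vecS (\<rho> g v1 - v1)
     + e (\<alpha> g v3 v1) * vecS (\<rho> g v2 - v2)"

definition phi_xy :: "('a \<Rightarrow> 'n symalg) \<Rightarrow> ('g \<Rightarrow> complex^'n::finite \<Rightarrow> complex^'n)
     \<Rightarrow> ('g \<Rightarrow> complex^'n \<Rightarrow> complex^'n \<Rightarrow> 'a)
     \<Rightarrow> ('g \<Rightarrow> complex^'n \<Rightarrow> complex^'n \<Rightarrow> complex^'n) \<Rightarrow> 'g \<Rightarrow> 'g
     \<Rightarrow> complex^'n \<Rightarrow> complex^'n \<Rightarrow> complex^'n \<Rightarrow> 'n symalg" where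
  "phi_xy e \<rho> \<alpha> \<beta> x y v1 v2 v3 =
     e (\<alpha> x (v1 + \<rho> y v1) (\<beta> y v2 v3)) + e (\<alpha> x (v2 + \<rho> y v2) (\<beta> y v3 v1))
     + e (\<alpha> x (v3 + \<rho> y v3) (\<beta> y v1 v2))"

definition phi :: "('g, 'b) monoid_scheme \<Rightarrow> ('a \<Rightarrow> 'n symalg) \<Rightarrow> ('g \<Rightarrow> complex^'n::finite \<Rightarrow> complex^'n)
     \<Rightarrow> ('g \<Rightarrow> complex^'n \<Rightarrow> complex^'n \<Rightarrow> 'a)
     \<Rightarrow> ('g \<Rightarrow> complex^'n \<Rightarrow> complex^'n \<Rightarrow> complex^'n) \<Rightarrow> 'g
     \<Rightarrow> complex^'n \<Rightarrow> complex^'n \<Rightarrow> complex^'n \<Rightarrow> 'n symalg" where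
  "phi G e \<rho> \<alpha> \<beta> g v1 v2 v3 =
     (\<Sum>(x,y)\<in>{(x,y). x \<in> carrier G \<and> y \<in> carrier G \<and> x \<otimes>\<^bsub>G\<^esub> y = g}.
        phi_xy e \<rho> \<alpha> \<beta> x y v1 v2 v3)"

end

theory Submission imports Defs begin

text \<open>Every term of \<open>phi_xy\<close> and \<open>psi\<close> is built from \<open>\<alpha>\<close>, \<open>\<beta>\<close> and the group action
  by sums and products in \<open>S(V)\<close>. Acting by \<open>h\<close> therefore commutes with each building block,
  provided the group labels are conjugated: \<open>h\<close> intertwines \<open>\<rho> y\<close> with \<open>\<rho> (h y h\<inverse>)\<close>, and
  invariance of \<open>\<alpha>\<close> and \<open>\<beta>\<close> is exactly this intertwining for the cochains. For \<open>phi\<close> one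
  finally reindexes the sum over factorisations \<open>x y = g\<close> by the bijection
  \<open>(x, y) \<mapsto> (h x h\<inverse>, h y h\<inverse>)\<close> onto the factorisations of \<open>h g h\<inverse>\<close>.\<close>

lemma (in group) conj_mult:
  assumes "h \<in> carrier G" "x \<in> carrier G" "y \<in> carrier G"
  shows "conj G h x \<otimes> conj G h y = conj G h (x \<otimes> y)"
  using assms by (simp add: m_assoc[symmetric]) (simp add: m_assoc)

text \<open>Stated with \<open>inv (inv h)\<close> already simplified to \<open>h\<close>, so that they apply as rewrite rules.\<close>

lemma (in group) conj_inv_conj:
  assumes "h \<in> carrier G" "x \<in> carrier G"
  shows "inv h \<otimes> conj G h x \<otimes> h = x"
  using assms by (simp add: m_assoc[symmetric]) (simp add: m_assoc)

lemma (in group) conj_conj_inv: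
  assumes "h \<in> carrier G" "x \<in> carrier G"
  shows "conj G h (inv h \<otimes> x \<otimes> h) = x"
  using assms by (simp add: m_assoc[symmetric]) (simp add: m_assoc)

lemma (in group) conj_bij_betw_factorisations:
  assumes h: "h \<in> carrier G" and g: "g \<in> carrier G"
  shows "bij_betw (\<lambda>(x, y). (conj G h x, conj G h y))
     {(x, y). x \<in> carrier G \<and> y \<in> carrier G \<and> x \<otimes> y = g}
     {(x, y). x \<in> carrier G \<and> y \<in> carrier G \<and> x \<otimes> y = conj G h g}"
proof (rule bij_betw_byWitness[where f' = "\<lambda>(x, y). (conj G (inv h) x, conj G (inv h) y)"])
  have "conj G (inv h) x \<otimes> conj G (inv h) y = g"
    if "x \<in> carrier G" "y \<in> carrier G" "x \<otimes> y = conj G h g" for x y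
    using that h g conj_mult[of "inv h" x y] by (simp add: conj_inv_conj)
  then show "(\<lambda>(x, y). (conj G (inv h) x, conj G (inv h) y)) `
      {(x, y). x \<in> carrier G \<and> y \<in> carrier G \<and> x \<otimes> y = conj G h g}
    \<subseteq> {(x, y). x \<in> carrier G \<and> y \<in> carrier G \<and> x \<otimes> y = g}"
    using h by auto
qed (use h in \<open>auto simp: conj_mult conj_inv_conj conj_conj_inv\<close>)

lemma lin_action_add:
  "lin_action G \<rho> \<Longrightarrow> h \<in> carrier G \<Longrightarrow> \<rho> h (v + w) = \<rho> h v + \<rho> h w"
  by (simp add: lin_action_def Vector_Spaces.linear_iff)

lemma lin_action_diff:
  "lin_action G \<rho> \<Longrightarrow> h \<in> carrier G \<Longrightarrow> \<rho> h (v - w) = \<rho> h v - \<rho> h w"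
  by (metis lin_action_add diff_add_cancel eq_diff_eq)

lemma lin_action_conj:
  assumes act: "lin_action G \<rho>" and h: "h \<in> carrier G" and y: "y \<in> carrier G"
  shows "\<rho> (conj G h y) (\<rho> h v) = \<rho> h (\<rho> y v)"
proof -
  interpret group G using act by (simp add: lin_action_def)
  have hom: "\<rho> (a \<otimes>\<^bsub>G\<^esub> b) = \<rho> a \<circ> \<rho> b" if "a \<in> carrier G" "b \<in> carrier G" for a b
    using act that by (simp add: lin_action_def)
  have "conj G h y \<otimes>\<^bsub>G\<^esub> h = h \<otimes>\<^bsub>G\<^esub> y"
    using h y by (simp add: m_assoc)
  then show ?thesis
    using hom h y by (metis comp_apply inv_closed m_closed)
qed

lemma additive_sum:
  fixes A :: "'a::comm_monoid_add \<Rightarrow> 'b::cancel_comm_monoid_add"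
  assumes add: "\<And>p q. A (p + q) = A p + A q"
  shows "A (sum f S) = (\<Sum>s\<in>S. A (f s))"
proof -
  have "A 0 = 0"
    using add[of 0 0] by simp
  then show ?thesis
    using sum_comp_morphism[of A f S] add by (simp add: comp_def)
qed

lemma inv_linear_vecS:
  assumes "S_action G \<rho> actS" "inv_linear G \<rho> \<alpha>" "h \<in> carrier G" "x \<in> carrier G"
  shows "actS h (vecS (\<alpha> x v w)) = vecS (\<alpha> (conj G h x) (\<rho> h v) (\<rho> h w))"
  using assms by (simp add: S_action_def inv_linear_def)

lemma inv_const_constS:
  assumes "S_action G \<rho> actS" "inv_const G \<rho> \<alpha>" "h \<in> carrier G" "x \<in> carrier G"
  shows "actS h (constS (\<alpha> x v w)) = constS (\<alpha> (conj G h x) (\<rho> h v) (\<rho> h w))"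
  using assms by (simp add: S_action_def inv_const_def)

lemma phi_xy_equivariant:
  assumes act: "lin_action G \<rho>" and \<beta>_inv: "inv_linear G \<rho> \<beta>"
    and h: "h \<in> carrier G" and x: "x \<in> carrier G" and y: "y \<in> carrier G"
    and add: "\<And>p q. A (p + q) = A p + A q"
    and \<alpha>_eq: "\<And>v w. A (e (\<alpha> x v w)) = e (\<alpha> (conj G h x) (\<rho> h v) (\<rho> h w))"
  shows "A (phi_xy e \<rho> \<alpha> \<beta> x y v1 v2 v3)
    = phi_xy e \<rho> \<alpha> \<beta> (conj G h x) (conj G h y) (\<rho> h v1) (\<rho> h v2) (\<rho> h v3)"
proof -
  have shift: "\<rho> h (v + \<rho> y v) = \<rho> h v + \<rho> (conj G h y) (\<rho> h v)" for v
    using lin_action_add[OF act h] lin_action_conj[OF act h y] by simp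
  have \<beta>_eq: "\<rho> h (\<beta> y v w) = \<beta> (conj G h y) (\<rho> h v) (\<rho> h w)" for v w
    using \<beta>_inv h y by (simp add: inv_linear_def)
  show ?thesis
    unfolding phi_xy_def add \<alpha>_eq shift \<beta>_eq ..
qed

lemma phi_equivariant:
  assumes act: "lin_action G \<rho>" and \<beta>_inv: "inv_linear G \<rho> \<beta>"
    and h: "h \<in> carrier G" and g: "g \<in> carrier G"
    and add: "\<And>p q. A (p + q) = A p + A q"
    and \<alpha>_eq: "\<And>x v w. x \<in> carrier G \<Longrightarrow>
      A (e (\<alpha> x v w)) = e (\<alpha> (conj G h x) (\<rho> h v) (\<rho> h w))"
  shows "A (phi G e \<rho> \<alpha> \<beta> g v1 v2 v3)
    = phi G e \<rho> \<alpha> \<beta> (conj G h g) (\<rho> h v1) (\<rho> h v2) (\<rho> h v3)"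
proof -
  interpret group G using act by (simp add: lin_action_def)
  let ?factorisations = "\<lambda>g. {(x, y). x \<in> carrier G \<and> y \<in> carrier G \<and> x \<otimes>\<^bsub>G\<^esub> y = g}"
  let ?term = "\<lambda>(x, y). phi_xy e \<rho> \<alpha> \<beta> x y (\<rho> h v1) (\<rho> h v2) (\<rho> h v3)"
  let ?conj = "\<lambda>(x, y). (conj G h x, conj G h y)"
  have "A (phi G e \<rho> \<alpha> \<beta> g v1 v2 v3)
      = (\<Sum>p\<in>?factorisations g.
          A (case p of (x, y) \<Rightarrow> phi_xy e \<rho> \<alpha> \<beta> x y v1 v2 v3))"
    unfolding phi_def by (rule additive_sum[OF add])
  also have "\<dots> = (\<Sum>p\<in>?factorisations g. ?term (?conj p))"
    by (rule sum.cong) (auto intro: phi_xy_equivariant[OF act \<beta>_inv h] add \<alpha>_eq)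
  also have "\<dots> = (\<Sum>p\<in>?factorisations (conj G h g). ?term p)"
    by (rule sum.reindex_bij_betw[OF conj_bij_betw_factorisations[OF h g]])
  finally show ?thesis
    unfolding phi_def .
qed

lemma psi_equivariant:
  assumes act: "lin_action G \<rho>" and h: "h \<in> carrier G" and g: "g \<in> carrier G"
    and add: "\<And>p q. A (p + q) = A p + A q"
    and mult: "\<And>p q. A (p * q) = A p * A q"
    and vec: "\<And>v. A (vecS v) = vecS (\<rho> h v)"
    and \<alpha>_eq: "\<And>v w. A (e (\<alpha> g v w)) = e (\<alpha> (conj G h g) (\<rho> h v) (\<rho> h w))"
  shows "A (psi e \<rho> \<alpha> g v1 v2 v3) = psi e \<rho> \<alpha> (conj G h g) (\<rho> h v1) (\<rho> h v2) (\<rho> h v3)"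
proof -
  have displacement: "\<rho> h (\<rho> g v - v) = \<rho> (conj G h g) (\<rho> h v) - \<rho> h v" for v
    using lin_action_diff[OF act h] lin_action_conj[OF act h g] by simp
  show ?thesis
    unfolding psi_def add mult vec \<alpha>_eq displacement ..
qed

lemma S_action_equivariant_cochain_ops:
  assumes act: "lin_action G \<rho>" and actS: "S_action G \<rho> actS"
    and \<beta>_inv: "inv_linear G \<rho> \<beta>"
    and \<alpha>_eq: "\<And>h x v w. h \<in> carrier G \<Longrightarrow> x \<in> carrier G \<Longrightarrow>
      actS h (e (\<alpha> x v w)) = e (\<alpha> (conj G h x) (\<rho> h v) (\<rho> h w))"
  shows "(\<forall>h\<in>carrier G. \<forall>x\<in>carrier G. \<forall>y\<in>carrier G. \<forall>v1 v2 v3.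
        actS h (phi_xy e \<rho> \<alpha> \<beta> x y v1 v2 v3)
          = phi_xy e \<rho> \<alpha> \<beta> (conj G h x) (conj G h y) (\<rho> h v1) (\<rho> h v2) (\<rho> h v3)) \<and>
     (\<forall>h\<in>carrier G. \<forall>g\<in>carrier G. \<forall>v1 v2 v3.
        actS h (phi G e \<rho> \<alpha> \<beta> g v1 v2 v3)
          = phi G e \<rho> \<alpha> \<beta> (conj G h g) (\<rho> h v1) (\<rho> h v2) (\<rho> h v3)) \<and>
     (\<forall>h\<in>carrier G. \<forall>g\<in>carrier G. \<forall>v1 v2 v3.
        actS h (psi e \<rho> \<alpha> g v1 v2 v3)
          = psi e \<rho> \<alpha> (conj G h g) (\<rho> h v1) (\<rho> h v2) (\<rho> h v3))"
proof -
  have add: "\<And>p q. actS h (p + q) = actS h p + actS h q"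
    and mult: "\<And>p q. actS h (p * q) = actS h p * actS h q"
    and vec: "\<And>v. actS h (vecS v) = vecS (\<rho> h v)" if "h \<in> carrier G" for h
    using actS that by (simp_all add: S_action_def)
  show ?thesis
    by (auto intro!: phi_xy_equivariant[OF act \<beta>_inv] phi_equivariant[OF act \<beta>_inv]
        psi_equivariant[OF act] add mult vec \<alpha>_eq)
qed

theorem lemma5p1:
  fixes G :: "('g, 'b) monoid_scheme"
    and \<rho> :: "'g \<Rightarrow> complex^'n::finite \<Rightarrow> complex^'n"
    and actS :: "'g \<Rightarrow> 'n symalg \<Rightarrow> 'n symalg"
    and \<beta> \<alpha>L :: "'g \<Rightarrow> complex^'n \<Rightarrow> complex^'n \<Rightarrow> complex^'n"
    and \<alpha>C :: "'g \<Rightarrow> complex^'n \<Rightarrow> complex^'n \<Rightarrow> complex"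
  assumes act: "lin_action G \<rho>"
    and actS: "S_action G \<rho> actS"
    and \<beta>_lin: "\<forall>g\<in>carrier G. alt_bilinV (\<beta> g)"
    and \<beta>_inv: "inv_linear G \<rho> \<beta>"
  shows
    "((\<forall>g\<in>carrier G. alt_bilinV (\<alpha>L g)) \<and> inv_linear G \<rho> \<alpha>L \<longrightarrow>
       (\<forall>h\<in>carrier G. \<forall>x\<in>carrier G. \<forall>y\<in>carrier G. \<forall>v1 v2 v3.
          actS h (phi_xy vecS \<rho> \<alpha>L \<beta> x y v1 v2 v3)
            = phi_xy vecS \<rho> \<alpha>L \<beta> (conj G h x) (conj G h y) (\<rho> h v1) (\<rho> h v2) (\<rho> h v3)) \<and>
       (\<forall>h\<in>carrier G. \<forall>g\<in>carrier G. \<forall>v1 v2 v3.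
          actS h (phi G vecS \<rho> \<alpha>L \<beta> g v1 v2 v3)
            = phi G vecS \<rho> \<alpha>L \<beta> (conj G h g) (\<rho> h v1) (\<rho> h v2) (\<rho> h v3)) \<and>
       (\<forall>h\<in>carrier G. \<forall>g\<in>carrier G. \<forall>v1 v2 v3.
          actS h (psi vecS \<rho> \<alpha>L g v1 v2 v3)
            = psi vecS \<rho> \<alpha>L (conj G h g) (\<rho> h v1) (\<rho> h v2) (\<rho> h v3)))
     \<and>
     ((\<forall>g\<in>carrier G. alt_bilinC (\<alpha>C g)) \<and> inv_const G \<rho> \<alpha>C \<longrightarrow>
       (\<forall>h\<in>carrier G. \<forall>x\<in>carrier G. \<forall>y\<in>carrier G. \<forall>v1 v2 v3.
          actS h (phi_xy constS \<rho> \<alpha>C \<beta> x y v1 v2 v3)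
            = phi_xy constS \<rho> \<alpha>C \<beta> (conj G h x) (conj G h y) (\<rho> h v1) (\<rho> h v2) (\<rho> h v3)) \<and>
       (\<forall>h\<in>carrier G. \<forall>g\<in>carrier G. \<forall>v1 v2 v3.
          actS h (phi G constS \<rho> \<alpha>C \<beta> g v1 v2 v3)
            = phi G constS \<rho> \<alpha>C \<beta> (conj G h g) (\<rho> h v1) (\<rho> h v2) (\<rho> h v3)) \<and>
       (\<forall>h\<in>carrier G. \<forall>g\<in>carrier G. \<forall>v1 v2 v3.
          actS h (psi constS \<rho> \<alpha>C g v1 v2 v3)
            = psi constS \<rho> \<alpha>C (conj G h g) (\<rho> h v1) (\<rho> h v2) (\<rho> h v3)))"
  by (rule conjI; intro impI; rule S_action_equivariant_cochain_ops[OF act actS \<beta>_inv])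
    (auto simp: inv_linear_vecS[OF actS] inv_const_constS[OF actS])

end
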